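(* Let $E_k[1/k]=\sum_k g(k)/k$. (i) Under Public WOM, with $p_2=1/2$ and cutoff $\underline{k}=k_{f\min}$ (so that all informed consumers pass on the information, $L=1$, $\Gamma=1$, and the bonus is $b=c/(k_{f\min}\phi(1,1/2))$), the seller's profit $(1-\beta)+\beta\,(p_2-b)(1-p_2)\Gamma$ is positive if and only if $E_k[1/k]>\frac{4\beta}{4-3\beta}\cdot\frac{c}{k_{f\min}}$. (ii) Under Private WOM, with $p_2=1/2$ and $L=1$ (bonus $b_{pr}=c_{pr}/\phi(1,1/2)$), the seller's profit is positive whenever $E_k[1/k]>\frac{4\beta}{4-3\beta}\,c_{pr}$.
   Context: A seller (zero marginal cost) faces a unit mass of unit-demand consumers: a fraction $1-\beta\in(0,1)$ informed with reservation value 1 (charged $p_1=1$), and a fraction $\beta$ uninformed with reservation value $v\sim U[0,1]$ (charged $p_2$). Informed consumers are linked to uninformed ones by a directed bipartite network with out-degree distribution $f$ (informed) and in-degree distribution $g$ (uninformed) on the positive integers, with $(1-\beta)\sum_k kf(k)=\beta\sum_k kg(k)$; $k_{f\min}$ is the smallest degree in the support of $f$. With a fraction $L$ of active links, $\Gamma(L)=1-\sum_k g(k)(1-L)^k$ and $\phi(L,p_2)=(1-p_2)\sum_k g(k)\frac{1-(1-L)^k}{kL}$ (so $\phi(1,1/2)=E_k[1/k]/2$). Profit with per-referral bonus $b$ is $(1-\beta)+\beta(p_2-b)(1-p_2)\Gamma(L)$. Public WOM: an informed consumer of out-degree $k$ informs all out-neighbours at lump-sum cost $c>0$ iff $kb\phi(L,p_2)\ge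 c$; cutoff $\underline{k}$ gives $L=\sum_{k\ge\underline{k}}f(k)$ and is implemented by $b=c/(\underline{k}\phi(L,p_2))$. Private WOM: each contact costs $c_{pr}>0$, and a bonus $b_{pr}$ induces fraction $L$ of active links with $\phi(L,p_2)b_{pr}=c_{pr}$. *)

theory Defs
  imports Complex_Main
begin

definition degree_dist :: "(nat \<Rightarrow> real) \<Rightarrow> bool" where
  "degree_dist f \<longleftrightarrow> (\<forall>k. 0 \<le> f k) \<and> f 0 = 0 \<and> f sums 1"

definition kmin :: "(nat \<Rightarrow> real) \<Rightarrow> nat" where
  "kmin f = (LEAST k. 0 < f k)"

definition Einv :: "(nat \<Rightarrow> real) \<Rightarrow> real" where
  "Einv g = (\<Sum>k. g k / real k)"

definition Gamma :: "(nat \<Rightarrow> real) \<Rightarrow> real \<Rightarrow> real" where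
  "Gamma g L = 1 - (\<Sum>k. g k * (1 - L) ^ k)"

definition phi :: "(nat \<Rightarrow> real) \<Rightarrow> real \<Rightarrow> real \<Rightarrow> real" where
  "phi g L p2 = (1 - p2) * (\<Sum>k. g k * (1 - (1 - L) ^ k) / (real k * L))"

text \<open>Fraction of active links under public WOM with cutoff kc.\<close>
definition L_pub :: "(nat \<Rightarrow> real) \<Rightarrow> nat \<Rightarrow> real" where
  "L_pub f kc = (\<Sum>k. if kc \<le> k then f k else 0)"

definition profit :: "real \<Rightarrow> real \<Rightarrow> real \<Rightarrow> real \<Rightarrow> real" where
  "profit \<beta> p2 b \<Gamma> = (1 - \<beta>) + \<beta> * (p2 - b) * (1 - p2) * \<Gamma>"

end

theory Submission
  imports Defs
begin

text \<open>When the cutoff is the smallest out-degree \<open>K\<close>, every informed consumer refers, so all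
  links are active: \<open>L = 1\<close>, hence \<open>\<Gamma> = 1\<close> and \<open>\<phi>(1, p\<^sub>2) = (1 - p\<^sub>2) E\<close> with
  \<open>E = E\<^sub>k[1/k] > 0\<close>. With \<open>p\<^sub>2 = 1/2\<close> and bonus
  \<open>c / (K \<phi>)\<close> the profit is \<open>((4 - 3\<beta>) K E - 4\<beta>c) / (4 K E)\<close>, which is positive exactly
  at the threshold; private WOM is the case \<open>K = 1\<close>, \<open>c = c\<^sub>p\<^sub>r\<close>.\<close>

lemma degree_dist_ex_pos:
  assumes "degree_dist f"
  obtains k where "0 < f k"
proof -
  have "f \<noteq> (\<lambda>k. 0)"
    using assms sums_unique2[OF sums_zero] by (force simp: degree_dist_def)
  with assms show ?thesis
    using that by (force simp: degree_dist_def fun_eq_iff less_eq_real_def)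
qed

lemma degree_dist_summable_div:
  assumes "degree_dist g"
  shows "summable (\<lambda>k. g k / real k)"
proof (rule summable_comparison_test)
  have nonneg: "\<And>k. 0 \<le> g k" using assms by (simp add: degree_dist_def)
  show "\<exists>N. \<forall>n\<ge>N. norm (g n / real n) \<le> g n"
  proof (intro exI[of _ 1] allI impI)
    fix n :: nat
    assume "1 \<le> n"
    then show "norm (g n / real n) \<le> g n"
      using nonneg[of n] by (simp add: divide_le_eq mult_le_cancel_left1)
  qed
  show "summable g"
    using assms by (auto simp: degree_dist_def sums_summable)
qed

lemma Einv_pos:
  assumes "degree_dist g"
  shows "0 < Einv g"
proof -
  obtain j where j: "0 < g j" using assms by (rule degree_dist_ex_pos)
  with assms have "0 < j" by (metis degree_dist_def gr0I less_irrefl)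
  show ?thesis
    unfolding Einv_def
    using degree_dist_summable_div[OF assms] j \<open>0 < j\<close> assms
    by (intro suminf_pos2[of _ j]) (auto simp: degree_dist_def)
qed

lemma kmin_pos:
  assumes "degree_dist f"
  shows "0 < f (kmin f)"
proof -
  obtain k where "0 < f k" using assms by (rule degree_dist_ex_pos)
  then show ?thesis unfolding kmin_def by (rule LeastI)
qed

lemma kmin_ge_1:
  assumes "degree_dist f"
  shows "1 \<le> kmin f"
  using kmin_pos[OF assms] assms by (cases "kmin f") (auto simp: degree_dist_def)

lemma less_kmin_eq_0:
  assumes "degree_dist f" and "k < kmin f"
  shows "f k = 0"
  using assms not_less_Least[of k "\<lambda>k. 0 < f k"]
  by (auto simp: degree_dist_def kmin_def less_eq_real_def)

lemma L_pub_kmin: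
  assumes "degree_dist f"
  shows "L_pub f (kmin f) = 1"
proof -
  have "(\<lambda>k. if kmin f \<le> k then f k else 0) = f"
    using less_kmin_eq_0[OF assms] by (auto simp: fun_eq_iff)
  then show ?thesis
    using assms by (simp add: L_pub_def degree_dist_def sums_unique[symmetric])
qed

lemma Gamma_1:
  assumes "g 0 = 0"
  shows "Gamma g 1 = 1"
proof -
  have "(\<lambda>k. g k * (1 - 1) ^ k) = (\<lambda>k. 0::real)"
    using assms by (auto simp: fun_eq_iff power_0_left)
  then show ?thesis unfolding Gamma_def by simp
qed

lemma phi_1:
  assumes "g 0 = 0"
  shows "phi g 1 p2 = (1 - p2) * Einv g"
proof -
  have "(\<lambda>k. g k * (1 - (1 - 1) ^ k) / (real k * 1)) = (\<lambda>k. g k / real k)"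
    using assms by (auto simp: fun_eq_iff power_0_left)
  then show ?thesis unfolding phi_def Einv_def by simp
qed

lemma profit_half_full_pos_iff:
  fixes \<beta> E K c :: real
  assumes "3 * \<beta> < 4" "0 < E" "0 < K"
  shows "profit \<beta> (1/2) (c / (K * (E / 2))) 1 > 0 \<longleftrightarrow> E > 4 * \<beta> / (4 - 3 * \<beta>) * (c / K)"
proof -
  have "profit \<beta> (1/2) (c / (K * (E / 2))) 1 = ((4 - 3 * \<beta>) * K * E - 4 * \<beta> * c) / (4 * K * E)"
    using assms by (simp add: profit_def field_simps)
  also have "\<dots> > 0 \<longleftrightarrow> (4 - 3 * \<beta>) * K * E > 4 * \<beta> * c"
    using assms by (simp add: zero_less_divide_iff) (smt (verit) mult_pos_pos)
  also have "\<dots> \<longleftrightarrow> E > 4 * \<beta> / (4 - 3 * \<beta>) * (c / K)"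
    using assms by (simp add: field_simps)
  finally show ?thesis .
qed

theorem corollary1:
  fixes f g :: "nat \<Rightarrow> real" and \<beta> c c_pr :: real
  assumes beta: "0 < \<beta>" "\<beta> < 1"
    and f: "degree_dist f" and g: "degree_dist g"
    and fmean: "summable (\<lambda>k. real k * f k)" and gmean: "summable (\<lambda>k. real k * g k)"
    and balance: "(1 - \<beta>) * (\<Sum>k. real k * f k) = \<beta> * (\<Sum>k. real k * g k)"
    and c: "0 < c" and cpr: "0 < c_pr"
  shows
   "(let L = L_pub f (kmin f);
         b = c / (real (kmin f) * phi g L (1/2))
     in profit \<beta> (1/2) b (Gamma g L) > 0
        \<longleftrightarrow> Einv g > 4 * \<beta> / (4 - 3 * \<beta>) * (c / real (kmin f)))
    \<and>
    (let b_pr = c_pr / phi g 1 (1/2)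
     in Einv g > 4 * \<beta> / (4 - 3 * \<beta>) * c_pr \<longrightarrow> profit \<beta> (1/2) b_pr (Gamma g 1) > 0)"
proof -
  have g0: "g 0 = 0" using g by (simp add: degree_dist_def)
  have "3 * \<beta> < 4" using beta by simp
  note threshold = profit_half_full_pos_iff[OF this Einv_pos[OF g]]
  have public_wom: "profit \<beta> (1/2) (c / (real (kmin f) * (Einv g / 2))) 1 > 0
      \<longleftrightarrow> Einv g > 4 * \<beta> / (4 - 3 * \<beta>) * (c / real (kmin f))"
    using kmin_ge_1[OF f] by (intro threshold) simp
  have private_wom: "profit \<beta> (1/2) (c_pr / (1 * (Einv g / 2))) 1 > 0
      \<longleftrightarrow> Einv g > 4 * \<beta> / (4 - 3 * \<beta>) * (c_pr / 1)"
    by (intro threshold) simp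
  show ?thesis
    using public_wom private_wom
    by (simp add: L_pub_kmin[OF f] Gamma_1[of g, OF g0] phi_1[of g, OF g0] Let_def)
qed

end
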